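(* Let $\mathbb{F}$ be a field of characteristic $2$, $V$ a $4$-dimensional vector space over $\mathbb{F}$, $W=\bigwedge^2V$, and fix an isomorphism $\chi:\bigwedge^4V\to\mathbb{F}$. Let $w,x,y,z\in V$ with $\chi(w\wedge x\wedge y\wedge z)=1$. Then the element $U=(w\wedge x)(y\wedge z)+(w\wedge y)(z\wedge x)+(w\wedge z)(x\wedge y)$ of $S_2(W)$ does not depend on the choice of $w,x,y,z$, and it is fixed under the induced action of $\mathrm{SL}(V)$.
   Context: $S_2(W)=(W\otimes W)/\langle a\otimes b-b\otimes a\rangle$ is the symmetric square of $W$; the image of $a\otimes b$ is written $ab$. $\mathrm{SL}(V)$ acts naturally on $W$ and hence on $S_2(W)$. *)

theory Defs
  imports "HOL-Analysis.Analysis"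
begin

text \<open>Bigwedge^2 V is realised inside M = 'a^4^4 as the alternating matrices,
  via  v wedge u  |->  (v_i u_j - v_j u_i)_{i,j}; this is an injective linear
  embedding of Bigwedge^2 V into M, equivariant for GL(V) acting on M by
  A |-> g A g^T.
  Bigwedge^4 V is identified with 'a via det, so an isomorphism chi is
  c * det with c nonzero.
  S_2(M) is realised by monomial coordinates: an element is a function
  f :: (4*4) => (4*4) => 'a with f p q the coefficient of e_p e_q (p \<le> q),
  zero for p > q.  S_2(W) embeds injectively into S_2(M).\<close>

definition wedge2 :: "'a::comm_ring_1^4 \<Rightarrow> 'a^4 \<Rightarrow> 'a^4^4" where
  "wedge2 v u = (\<chi> i j. v$i * u$j - v$j * u$i)"

definition wedge4 :: "'a::comm_ring_1^4 \<Rightarrow> 'a^4 \<Rightarrow> 'a^4 \<Rightarrow> 'a^4 \<Rightarrow> 'a" where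
  "wedge4 w x y z = det (vector [w, x, y, z] :: 'a^4^4)"

definition plt :: "4 \<times> 4 \<Rightarrow> 4 \<times> 4 \<Rightarrow> bool" where
  "plt p q = (fst p < fst q \<or> (fst p = fst q \<and> snd p < snd q))"

definition ent :: "'a^4^4 \<Rightarrow> 4 \<times> 4 \<Rightarrow> 'a" where
  "ent A p = A $ fst p $ snd p"

definition sprod :: "'a::comm_ring_1^4^4 \<Rightarrow> 'a^4^4 \<Rightarrow> (4 \<times> 4 \<Rightarrow> 4 \<times> 4 \<Rightarrow> 'a)" where
  "sprod A B = (\<lambda>p q. if plt p q then ent A p * ent B q + ent A q * ent B p
                       else if p = q then ent A p * ent B p else 0)"

definition s2add :: "(4 \<times> 4 \<Rightarrow> 4 \<times> 4 \<Rightarrow> 'a::plus) \<Rightarrow> (4 \<times> 4 \<Rightarrow> 4 \<times> 4 \<Rightarrow> 'a) \<Rightarrow> (4 \<times> 4 \<Rightarrow> 4 \<times> 4 \<Rightarrow> 'a)" where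
  "s2add f h = (\<lambda>p q. f p q + h p q)"

definition Uel :: "'a::comm_ring_1^4 \<Rightarrow> 'a^4 \<Rightarrow> 'a^4 \<Rightarrow> 'a^4 \<Rightarrow> (4 \<times> 4 \<Rightarrow> 4 \<times> 4 \<Rightarrow> 'a)" where
  "Uel w x y z = s2add (s2add (sprod (wedge2 w x) (wedge2 y z)) (sprod (wedge2 w y) (wedge2 z x)))
                       (sprod (wedge2 w z) (wedge2 x y))"

definition actW :: "'a::comm_ring_1^4^4 \<Rightarrow> 'a^4^4 \<Rightarrow> 'a^4^4" where
  "actW g A = g ** A ** transpose g"

definition unitM :: "4 \<times> 4 \<Rightarrow> 'a::comm_ring_1^4^4" where
  "unitM p = (\<chi> i j. if (i, j) = p then 1 else 0)"

definition s2act :: "'a::comm_ring_1^4^4 \<Rightarrow> (4 \<times> 4 \<Rightarrow> 4 \<times> 4 \<Rightarrow> 'a) \<Rightarrow> (4 \<times> 4 \<Rightarrow> 4 \<times> 4 \<Rightarrow> 'a)" where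
  "s2act g f = (\<lambda>r s. \<Sum>p\<in>UNIV. \<Sum>q\<in>UNIV.
      if plt p q \<or> p = q then f p q * sprod (actW g (unitM p)) (actW g (unitM q)) r s else 0)"

end

theory Submission
  imports Defs
begin

text \<open>U is multilinear and alternating in (w, x, y, z), hence equal to wedge4 w x y z
  times its value at the standard basis; so it depends only on chi(w^x^y^z). That value
  spans the image of the fourth exterior power under a GL(V)-equivariant map, so g
  multiplies it by det g and SL(V) fixes it. Both facts are verified in coordinates;
  neither uses characteristic 2.\<close>

lemma det_4x4:
  "det (A::'a::comm_ring_1^4^4) =
     A$1$1*A$2$2*A$3$3*A$4$4 - A$1$1*A$2$2*A$3$4*A$4$3 - A$1$1*A$2$3*A$3$2*A$4$4
   + A$1$1*A$2$3*A$3$4*A$4$2 + A$1$1*A$2$4*A$3$2*A$4$3 - A$1$1*A$2$4*A$3$3*A$4$2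
   - A$1$2*A$2$1*A$3$3*A$4$4 + A$1$2*A$2$1*A$3$4*A$4$3 + A$1$2*A$2$3*A$3$1*A$4$4
   - A$1$2*A$2$3*A$3$4*A$4$1 - A$1$2*A$2$4*A$3$1*A$4$3 + A$1$2*A$2$4*A$3$3*A$4$1
   + A$1$3*A$2$1*A$3$2*A$4$4 - A$1$3*A$2$1*A$3$4*A$4$2 - A$1$3*A$2$2*A$3$1*A$4$4
   + A$1$3*A$2$2*A$3$4*A$4$1 + A$1$3*A$2$4*A$3$1*A$4$2 - A$1$3*A$2$4*A$3$2*A$4$1
   - A$1$4*A$2$1*A$3$2*A$4$3 + A$1$4*A$2$1*A$3$3*A$4$2 + A$1$4*A$2$2*A$3$1*A$4$3
   - A$1$4*A$2$2*A$3$3*A$4$1 - A$1$4*A$2$3*A$3$1*A$4$2 + A$1$4*A$2$3*A$3$2*A$4$1"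
proof -
  have sign_swap_comp: "sign (Transposition.transpose a b \<circ> q) = (if a = b then sign q else - sign q)"
    if "permutation q" for a b :: 4 and q
    using that by (simp add: sign_compose permutation_swap_id sign_swap_id)
  have permutation_swap_comp: "permutation (Transposition.transpose a b \<circ> q)"
    if "permutation q" for a b :: 4 and q
    using that by (simp add: permutation_compose permutation_swap_id)
  have "finite {2::4, 3, 4}" "1 \<notin> {2::4, 3, 4}"
    and "finite {3::4, 4}" "2 \<notin> {3::4, 4}"
    and "finite {4::4}" "3 \<notin> {4::4}" by auto
  note insert_perms = sum_over_permutations_insert[OF this(1,2)]
    sum_over_permutations_insert[OF this(3,4)] sum_over_permutations_insert[OF this(5,6)]
  show ?thesis
    unfolding det_def UNIV_4 insert_perms permutes_sing
    by (simp add: sign_swap_comp permutation_swap_comp sign_swap_id permutation_swap_id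
        swap_id_eq algebra_simps)
qed

lemma vector_4 [simp]:
  "(vector [a, b, c, d] :: 'a::zero^4) $ 1 = a" "(vector [a, b, c, d] :: 'a^4) $ 2 = b"
  "(vector [a, b, c, d] :: 'a^4) $ 3 = c" "(vector [a, b, c, d] :: 'a^4) $ 4 = d"
  by (simp_all add: vector_def)

text \<open>In the numeral type 4 the numeral 4 is 0, the least element.\<close>
lemma order_4:
  "(1::4) < 2" "(1::4) < 3" "(4::4) < 1" "(2::4) < 3" "(4::4) < 2" "(4::4) < 3"
  "\<not> (2::4) < 1" "\<not> (3::4) < 1" "\<not> (1::4) < 4" "\<not> (3::4) < 2" "\<not> (2::4) < 4" "\<not> (3::4) < 4"
  by (simp_all add: less_bit0_def bit0.Rep_numeral bit0.Rep_1 bit0.Rep_0)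

lemma sum_UNIV_pairs:
  "(\<Sum>p\<in>(UNIV::('a::finite \<times> 'b::finite) set). f p) = (\<Sum>i\<in>UNIV. \<Sum>j\<in>UNIV. f (i, j))"
  by (simp add: sum.cartesian_product flip: UNIV_Times_UNIV)

definition Uel_basis :: "4 \<times> 4 \<Rightarrow> 4 \<times> 4 \<Rightarrow> 'a::comm_ring_1" where
  "Uel_basis = Uel (axis 1 1) (axis 2 1) (axis 3 1) (axis 4 1)"

lemma Uel_eq_wedge4_Uel_basis: "Uel w x y z = (\<lambda>p q. wedge4 w x y z * Uel_basis p q)"
proof (intro ext)
  fix p q :: "4 \<times> 4"
  obtain i j k l where "p = (i, j)" "q = (k, l)" by fastforce
  then show "Uel w x y z p q = wedge4 w x y z * Uel_basis p q"
    using exhaust_4[of i] exhaust_4[of j] exhaust_4[of k] exhaust_4[of l]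
    by (elim disjE) (simp_all add: Uel_basis_def Uel_def s2add_def sprod_def plt_def ent_def
        wedge2_def wedge4_def det_4x4 axis_def, simp_all add: algebra_simps)
qed

lemma Uel_basis_explicit:
  "(Uel_basis p q :: 'a::comm_ring_1) =
    (if p = (1,2) \<and> q = (3,4) then 1 else if p = (4,3) \<and> q = (1,2) then -1
     else if p = (2,1) \<and> q = (3,4) then -1 else if p = (4,3) \<and> q = (2,1) then 1
     else if p = (4,2) \<and> q = (1,3) then 1 else if p = (1,3) \<and> q = (2,4) then -1
     else if p = (4,2) \<and> q = (3,1) then -1 else if p = (2,4) \<and> q = (3,1) then 1
     else if p = (1,4) \<and> q = (2,3) then 1 else if p = (1,4) \<and> q = (3,2) then -1
     else if p = (4,1) \<and> q = (2,3) then -1 else if p = (4,1) \<and> q = (3,2) then 1 else 0)"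
proof -
  obtain i j k l where "p = (i, j)" "q = (k, l)" by fastforce
  then show ?thesis
    using exhaust_4[of i] exhaust_4[of j] exhaust_4[of k] exhaust_4[of l]
    by (elim disjE) (simp_all add: Uel_basis_def Uel_def s2add_def sprod_def plt_def ent_def
        wedge2_def axis_def order_4)
qed

lemma actW_unitM: "actW g (unitM (i, j)) = (\<chi> a b. g$a$i * g$b$j)"
  by (simp add: vec_eq_iff actW_def unitM_def matrix_matrix_mult_def transpose_def
      if_distrib [of "\<lambda>t. _ * t"] if_distrib [of "\<lambda>t. t * _"] flip: if_if_eq_conj cong: if_cong)

lemma s2act_cmult: "s2act g (\<lambda>p q. d * f p q) = (\<lambda>r s. d * s2act g f r s)"
  by (simp add: s2act_def sum_distrib_left mult.assoc if_distrib cong: if_cong)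

lemma s2act_Uel_basis: "s2act g Uel_basis = (\<lambda>r s. det g * (Uel_basis r s :: 'a::comm_ring_1))"
proof (intro ext)
  fix r s :: "4 \<times> 4"
  define S where "S p q = sprod (actW g (unitM p)) (actW g (unitM q)) r s" for p q
  have "s2act g Uel_basis r s =
      S (1,2) (3,4) - S (4,3) (1,2) - S (2,1) (3,4) + S (4,3) (2,1)
    + S (4,2) (1,3) - S (1,3) (2,4) - S (4,2) (3,1) + S (2,4) (3,1)
    + S (1,4) (2,3) - S (1,4) (3,2) - S (4,1) (2,3) + S (4,1) (3,2)"
    unfolding s2act_def Uel_basis_explicit sum_UNIV_pairs sum_4 S_def
    by (simp add: plt_def order_4)
  also have "\<dots> = det g * Uel_basis r s"
  proof -
    obtain i j k l where "r = (i, j)" "s = (k, l)" by fastforce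
    then show ?thesis
      unfolding S_def actW_unitM
      using exhaust_4[of i] exhaust_4[of j] exhaust_4[of k] exhaust_4[of l]
      by (elim disjE) (simp_all add: Uel_basis_explicit sprod_def plt_def ent_def det_4x4 order_4)
  qed
  finally show "s2act g Uel_basis r s = det g * Uel_basis r s" .
qed

theorem lemma3p5:
  fixes c :: "'a::field" and w x y z :: "'a^4"
  assumes "CHAR('a) = 2"
    and "c \<noteq> 0"
    and "c * wedge4 w x y z = 1"
  shows "(\<forall>w' x' y' z' :: 'a^4. c * wedge4 w' x' y' z' = 1 \<longrightarrow> Uel w' x' y' z' = Uel w x y z)
       \<and> (\<forall>g :: 'a^4^4. det g = 1 \<longrightarrow> s2act g (Uel w x y z) = Uel w x y z)"
proof (intro conjI allI impI)
  fix w' x' y' z' :: "'a^4"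
  assume "c * wedge4 w' x' y' z' = 1"
  with assms(2,3) have "wedge4 w' x' y' z' = wedge4 w x y z"
    by (metis mult_left_cancel)
  then show "Uel w' x' y' z' = Uel w x y z"
    by (simp add: Uel_eq_wedge4_Uel_basis)
next
  fix g :: "'a^4^4"
  assume "det g = 1"
  then show "s2act g (Uel w x y z) = Uel w x y z"
    by (simp add: Uel_eq_wedge4_Uel_basis s2act_cmult s2act_Uel_basis)
qed

end
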